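(* Let $n,t,k$ be integers with $n\geq 2t\geq 4$ and $k\geq 2$. Then $A_k(n,0^t)\leq \beta_k(t)^n$, where $\beta_k(t)=k-(k-1)k^{-t-1}$.
   Context: Words are over $\Sigma_k=\{0,1,\ldots,k-1\}$, and $0^t$ is the word consisting of $t$ zeros. $A_k(m,v)$ denotes the number of words of length $m$ over $\Sigma_k$ that do not contain $v$ as a factor. *)

theory Defs
  imports Complex_Main
begin

definition is_factor :: "'a list \<Rightarrow> 'a list \<Rightarrow> bool" where
  "is_factor v w \<longleftrightarrow> (\<exists>x y. w = x @ v @ y)"

definition words :: "nat \<Rightarrow> nat \<Rightarrow> nat list set" where
  "words k m = {w. length w = m \<and> set w \<subseteq> {0..<k}}"

definition avoid_count :: "nat \<Rightarrow> nat \<Rightarrow> nat list \<Rightarrow> nat" where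
  "avoid_count k m v = card {w \<in> words k m. \<not> is_factor v w}"

definition beta :: "nat \<Rightarrow> nat \<Rightarrow> real" where
  "beta k t = real k - (real k - 1) * (real k) powi (- int t - 1)"

end

theory Submission
  imports Defs "HOL-Library.Sublist"
begin

text \<open>
  Let \<open>a\<^sub>m\<close> be the number of words of length \<open>m\<close> avoiding \<open>0\<^sup>t\<close>. Extending a word of
  length \<open>m + t\<close> by one letter gives \<open>k a\<^sub>m\<^sub>+\<^sub>t\<close> words; among them, the words
  \<open>v c 0\<^sup>t\<close> with \<open>v\<close> avoiding \<open>0\<^sup>t\<close> and \<open>c \<noteq> 0\<close> all contain \<open>0\<^sup>t\<close>, so
  \<open>a\<^sub>m\<^sub>+\<^sub>t\<^sub>+\<^sub>1 \<le> k a\<^sub>m\<^sub>+\<^sub>t - (k - 1) a\<^sub>m\<close>. Together with \<open>a\<^sub>m\<^sub>+\<^sub>t \<le> k\<^sup>t a\<^sub>m\<close> this yields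
  \<open>a\<^sub>m\<^sub>+\<^sub>1 \<le> \<gamma> a\<^sub>m\<close> for \<open>m \<ge> t\<close>, where \<open>\<gamma> = k - (k - 1) k\<^sup>-\<^sup>t\<close>, hence
  \<open>a\<^sub>n \<le> k\<^sup>t \<gamma>\<^sup>n\<^sup>-\<^sup>t = (k \<gamma>)\<^sup>t \<gamma>\<^sup>n\<^sup>-\<^sup>2\<^sup>t\<close>. Finally \<open>\<gamma> \<le> \<beta>\<close> and \<open>k \<gamma> \<le> \<beta>\<^sup>2\<close>.
\<close>

lemma is_factor_eq_sublist: "is_factor = sublist"
  by (intro ext) (simp add: is_factor_def sublist_def)

lemma sublist_append_Cons_iff:
  assumes "a \<notin> set zs"
  shows "sublist zs (xs @ a # ys) \<longleftrightarrow> sublist zs xs \<or> sublist zs ys"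
proof
  assume "sublist zs (xs @ a # ys)"
  then consider "sublist zs xs" | "sublist zs (a # ys)"
    | zs1 zs2 where "zs = zs1 @ zs2" "suffix zs1 xs" "prefix zs2 (a # ys)"
    by (auto simp: sublist_append)
  then show "sublist zs xs \<or> sublist zs ys"
  proof cases
    case 2
    then show ?thesis using assms by (auto simp: sublist_Cons_right prefix_Cons)
  next
    case 3
    then show ?thesis using assms by (cases zs2) (auto simp: prefix_Cons)
  qed simp
next
  have "sublist xs (xs @ a # ys)" and "sublist ys (xs @ a # ys)"
    using sublist_append_leftI[of ys "xs @ [a]"] by simp_all
  moreover assume "sublist zs xs \<or> sublist zs ys"
  ultimately show "sublist zs (xs @ a # ys)"
    using sublist_order.order_trans by blast
qed

lemma words_eq_lists_length: "words k m = {xs. set xs \<subseteq> {0..<k} \<and> length xs = m}"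
  by (auto simp: words_def)

lemma finite_words: "finite (words k m)"
  by (simp add: words_eq_lists_length finite_lists_length_eq)

lemma card_words: "card (words k m) = k ^ m"
  by (simp add: words_eq_lists_length card_lists_length_eq)

definition avoiding :: "nat \<Rightarrow> nat \<Rightarrow> nat list \<Rightarrow> nat list set" where
  "avoiding k m v = {w \<in> words k m. \<not> sublist v w}"

lemma avoid_count_eq_card_avoiding: "avoid_count k m v = card (avoiding k m v)"
  by (simp add: avoid_count_def avoiding_def is_factor_eq_sublist)

lemma finite_avoiding: "finite (avoiding k m v)"
  by (simp add: avoiding_def finite_words)

lemma card_avoiding_le: "card (avoiding k m v) \<le> k ^ m"
proof -
  have "card (avoiding k m v) \<le> card (words k m)"
    by (rule card_mono[OF finite_words]) (auto simp: avoiding_def)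
  then show ?thesis by (simp add: card_words)
qed

lemma card_avoiding_add_le:
  "card (avoiding k (p + q) v) \<le> card (avoiding k p v) * card (avoiding k q v)"
proof -
  have "avoiding k (p + q) v \<subseteq> (\<lambda>(u, z). u @ z) ` (avoiding k p v \<times> avoiding k q v)"
  proof
    fix w assume w: "w \<in> avoiding k (p + q) v"
    have "\<not> sublist v (take p w)" "\<not> sublist v (drop p w)"
      using w sublist_order.order_trans[OF _ sublist_take, of v p w]
        sublist_order.order_trans[OF _ sublist_drop, of v p w]
      by (auto simp: avoiding_def)
    then have "take p w \<in> avoiding k p v" "drop p w \<in> avoiding k q v"
      using w by (auto simp: avoiding_def words_def dest: in_set_takeD in_set_dropD)
    then show "w \<in> (\<lambda>(u, z). u @ z) ` (avoiding k p v \<times> avoiding k q v)"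
      by (intro image_eqI[of _ _ "(take p w, drop p w)"]) auto
  qed
  then have "card (avoiding k (p + q) v)
      \<le> card ((\<lambda>(u, z). u @ z) ` (avoiding k p v \<times> avoiding k q v))"
    by (intro card_mono finite_imageI finite_cartesian_product finite_avoiding)
  also have "\<dots> \<le> card (avoiding k p v \<times> avoiding k q v)"
    by (intro card_image_le finite_cartesian_product finite_avoiding)
  finally show ?thesis by (simp add: card_cartesian_product)
qed

lemma avoiding_Suc_subset:
  "avoiding k (Suc m) v \<subseteq> (\<lambda>(w, c). w @ [c]) ` (avoiding k m v \<times> {0..<k})"
proof
  fix w assume w: "w \<in> avoiding k (Suc m) v"
  then have "w \<noteq> []" by (auto simp: avoiding_def words_def)
  then have "last w \<in> set w" by simp
  then have "last w \<in> {0..<k}" "butlast w \<in> avoiding k m v"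
    using w sublist_order.order_trans[OF _ sublist_butlast, of v w]
    by (auto simp: avoiding_def words_def dest: in_set_butlastD)
  with \<open>w \<noteq> []\<close> show "w \<in> (\<lambda>(w, c). w @ [c]) ` (avoiding k m v \<times> {0..<k})"
    by (intro image_eqI[of _ _ "(butlast w, last w)"]) auto
qed

lemma append_nonzero_zeros_in_avoiding:
  assumes "v \<in> avoiding k p (replicate t 0)" and "c \<in> {1..<k}" and "t \<ge> 1"
  shows "v @ c # replicate (t - 1) 0 \<in> avoiding k (p + t) (replicate t 0)"
proof -
  have "\<not> sublist (replicate t 0) (replicate (t - 1) (0::nat))"
    using sublist_length_le[of "replicate t 0" "replicate (t - 1) (0::nat)"] assms(3) by auto
  moreover have "\<not> sublist (replicate t 0) v" and "c \<notin> set (replicate t 0)"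
    using assms(1,2) by (auto simp: avoiding_def)
  ultimately have "\<not> sublist (replicate t 0) (v @ c # replicate (t - 1) 0)"
    by (simp add: sublist_append_Cons_iff)
  moreover have "v @ c # replicate (t - 1) 0 \<in> words k (p + t)"
    using assms by (auto simp: avoiding_def words_def)
  ultimately show ?thesis by (simp add: avoiding_def)
qed

lemma card_avoiding_zeros_rec:
  assumes "t \<ge> 1"
  defines "Z \<equiv> replicate t (0::nat)"
  shows "card (avoiding k (p + t + 1) Z) + (k - 1) * card (avoiding k p Z)
    \<le> k * card (avoiding k (p + t) Z)"
proof -
  define C where "C = (\<lambda>(w, c). w @ [c]) ` (avoiding k (p + t) Z \<times> {0..<k})"
  define B where "B = (\<lambda>(v, c). v @ c # Z) ` (avoiding k p Z \<times> {1..<k})"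
  have "finite C" by (simp add: C_def finite_avoiding)
  have card_C: "card C \<le> k * card (avoiding k (p + t) Z)"
    using card_image_le[of "avoiding k (p + t) Z \<times> {0..<k}" "\<lambda>(w, c). w @ [c]"]
    by (simp add: C_def finite_avoiding card_cartesian_product mult.commute)
  have card_B: "card B = (k - 1) * card (avoiding k p Z)"
  proof -
    have "inj_on (\<lambda>(v, c). v @ c # Z) (avoiding k p Z \<times> {1..<k})"
    proof (rule inj_onI, clarify)
      fix v c v' c'
      assume "v \<in> avoiding k p Z" "v' \<in> avoiding k p Z" and eq: "v @ c # Z = v' @ c' # Z"
      then have "length v = length v'" by (simp add: avoiding_def words_def)
      then show "v = v' \<and> c = c'" using eq by simp
    qed
    then show ?thesis by (simp add: B_def card_image card_cartesian_product)
  qed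
  have "avoiding k (p + t + 1) Z \<subseteq> C"
    using avoiding_Suc_subset[of k "p + t" Z] by (simp add: C_def)
  moreover have "B \<subseteq> C"
  proof
    fix x assume "x \<in> B"
    then obtain v c where v: "v \<in> avoiding k p Z" and c: "c \<in> {1..<k}" and x: "x = v @ c # Z"
      by (auto simp: B_def)
    have "Z = replicate (t - 1) 0 @ [0]"
      using assms(1) by (cases t) (simp_all add: Z_def replicate_append_same)
    then have "x = (v @ c # replicate (t - 1) 0) @ [0]" by (simp add: x)
    moreover have "v @ c # replicate (t - 1) 0 \<in> avoiding k (p + t) Z"
      using append_nonzero_zeros_in_avoiding[OF v[unfolded Z_def] c assms(1)] by (simp add: Z_def)
    moreover have "(0::nat) \<in> {0..<k}" using c by simp
    ultimately show "x \<in> C"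
      unfolding C_def by (intro image_eqI[of _ _ "(v @ c # replicate (t - 1) 0, 0)"]) auto
  qed
  moreover have "avoiding k (p + t + 1) Z \<inter> B = {}"
  proof -
    have "sublist Z (v @ c # Z)" for v c
      using sublist_append_leftI[of Z "v @ [c]"] by simp
    then show ?thesis unfolding avoiding_def B_def by fastforce
  qed
  ultimately have "card (avoiding k (p + t + 1) Z) + card B \<le> card C"
    using \<open>finite C\<close> card_Un_disjoint[of "avoiding k (p + t + 1) Z" B]
      card_mono[of C "avoiding k (p + t + 1) Z \<union> B"]
    by (simp add: finite_avoiding B_def)
  then show ?thesis using card_B card_C by linarith
qed

definition gamma :: "nat \<Rightarrow> nat \<Rightarrow> real" where
  "gamma k t = real k - (real k - 1) / real k ^ t"

lemma one_le_gamma: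
  assumes "k \<ge> 1"
  shows "1 \<le> gamma k t"
proof -
  have "(real k - 1) / real k ^ t \<le> (real k - 1) / 1"
    using assms by (intro divide_left_mono) (auto simp: one_le_power)
  then show ?thesis by (simp add: gamma_def)
qed

lemma avoid_count_zeros_Suc_le:
  assumes "t \<ge> 1" and "k \<ge> 1"
  shows "real (avoid_count k (Suc (p + t)) (replicate t 0))
    \<le> gamma k t * real (avoid_count k (p + t) (replicate t 0))"
proof -
  define a where "a = (\<lambda>m. real (card (avoiding k m (replicate t 0))))"
  have rec: "a (Suc (p + t)) + (real k - 1) * a p \<le> real k * a (p + t)"
    using of_nat_mono[OF card_avoiding_zeros_rec[OF assms(1), of k p], where 'a = real] assms(2)
    by (simp add: a_def of_nat_diff)
  have "card (avoiding k (p + t) (replicate t 0)) \<le> card (avoiding k p (replicate t 0)) * k ^ t"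
    using card_avoiding_add_le[of k p t] card_avoiding_le[of k t] mult_le_mono2 le_trans by blast
  then have "a (p + t) \<le> a p * real k ^ t"
    unfolding a_def by (metis of_nat_le_iff of_nat_mult of_nat_power)
  then have "a (p + t) / real k ^ t \<le> a p"
    using assms(2) by (simp add: pos_divide_le_eq)
  then have "(real k - 1) * (a (p + t) / real k ^ t) \<le> (real k - 1) * a p"
    using assms(2) by (intro mult_left_mono) auto
  moreover have "gamma k t * a (p + t) = real k * a (p + t) - (real k - 1) * (a (p + t) / real k ^ t)"
    by (simp add: gamma_def left_diff_distrib)
  ultimately show ?thesis
    using rec by (simp add: a_def avoid_count_eq_card_avoiding)
qed

lemma avoid_count_zeros_le:
  assumes "t \<ge> 1" and "k \<ge> 1"
  shows "real (avoid_count k (t + j) (replicate t 0)) \<le> gamma k t ^ j * real k ^ t"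
proof (induction j)
  case 0
  show ?case
    using card_avoiding_le[of k t] by (simp add: avoid_count_eq_card_avoiding flip: of_nat_power)
next
  case (Suc j)
  have "real (avoid_count k (t + Suc j) (replicate t 0))
      \<le> gamma k t * real (avoid_count k (t + j) (replicate t 0))"
    using avoid_count_zeros_Suc_le[OF assms, of j] by (simp add: add.commute)
  also have "\<dots> \<le> gamma k t * (gamma k t ^ j * real k ^ t)"
    using Suc.IH one_le_gamma[OF assms(2), of t] by (intro mult_left_mono) auto
  finally show ?case by simp
qed

lemma beta_eq: "beta k t = real k - (real k - 1) / real k ^ Suc t"
proof -
  have "real k powi (- int t - 1) = inverse (real k ^ Suc t)"
    by (simp add: power_int_def nat_add_distrib power_inverse)
  then show ?thesis by (simp add: beta_def field_simps)
qed

lemma gamma_le_beta: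
  assumes "k \<ge> 1"
  shows "gamma k t \<le> beta k t"
proof -
  have "(real k - 1) / real k ^ Suc t \<le> (real k - 1) / real k ^ t"
    using assms by (intro divide_left_mono) auto
  then show ?thesis by (simp add: gamma_def beta_eq)
qed

lemma mult_gamma_le_beta_sq:
  assumes "k \<ge> 1"
  shows "real k * gamma k t \<le> beta k t ^ 2"
proof -
  define e where "e = (real k - 1) / real k ^ t"
  have "beta k t ^ 2 - real k * gamma k t = (real k - 2) * e + (e / real k) ^ 2"
    using assms by (simp add: beta_eq gamma_def e_def power2_eq_square field_simps)
  moreover have "(real k - 2) * e \<ge> 0"
  proof (cases "k = 1")
    case False
    then show ?thesis using assms by (simp add: e_def)
  qed (simp add: e_def)
  ultimately show ?thesis using zero_le_power2[of "e / real k"] by linarith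
qed

theorem lemma14:
  fixes n t k :: nat
  assumes "n \<ge> 2 * t" and "2 * t \<ge> 4" and "k \<ge> 2"
  shows "real (avoid_count k n (replicate t 0)) \<le> beta k t ^ n"
proof -
  have t: "t \<ge> 1" and k: "k \<ge> 1" using assms by auto
  obtain i where n: "n = 2 * t + i" using assms(1) le_Suc_ex by blast
  have "real (avoid_count k n (replicate t 0)) \<le> gamma k t ^ (t + i) * real k ^ t"
    using avoid_count_zeros_le[OF t k, of "t + i"] by (simp add: n mult_2 add.assoc)
  also have "\<dots> = (real k * gamma k t) ^ t * gamma k t ^ i"
    by (simp add: power_add power_mult_distrib)
  also have "\<dots> \<le> (beta k t ^ 2) ^ t * beta k t ^ i"
    using mult_gamma_le_beta_sq[OF k] gamma_le_beta[OF k] one_le_gamma[OF k, of t]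
    by (intro mult_mono power_mono) auto
  also have "\<dots> = beta k t ^ (2 * t + i)"
    by (simp add: power_add power_mult)
  finally show ?thesis by (simp add: n)
qed

end
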